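(* Let $V$ be a complex vector space with basis $\{v_i:i\in\mathbb{Z}\}$ and let $\mathbf{a}\in\mathbb{C}^{\mathbb{Z}}$ be not generic. Then $\mathbf{a}^\perp$ is a subspace of $V$ of finite codimension $m$, where $m$ is the minimal non-negative integer for which there exists a non-zero $v\in\mathbf{a}^\perp$ with $\omega(v)=m$. Moreover, for such a $v$ (with $\omega(v)=m$), the collection of all $\mathbb{Z}$-translates of $v$ is a basis of $\mathbf{a}^\perp$, and this basis extended by $v_0,v_1,\dots,v_{m-1}$ (an empty list if $m=0$) is a basis of $V$.
   Context: $\mathbb{C}^{\mathbb{Z}}$ is identified with the dual $V^*$: $\mathbf{a}=(a_i)$ corresponds to the functional $v_i\mapsto a_i$; write $\langle\mathbf{a},v\rangle$ for the evaluation. $\mathbb{Z}$ acts on $V$ by $n\cdot v_i=v_{i+n}$ and on $\mathbb{C}^{\mathbb{Z}}$ by $n\cdot(a_i)_i=(a_{i+n})_i$; write $x^{(n)}=n\cdot x$ ($\mathbb{Z}$-translates). An element $\mathbf{a}$ is generic if the multiset of all its $\mathbb{Z}$-translates is linearly independent. $\mathbf{a}^\perp=\{v\in V:\langle\mathbf{a},v^{(i)}\rangle=0\text{ for all }i\in\mathbb{Z}\}$. For non-zero $v=\sum_i c_iv_i\in V$, $l(v)=\min\{i:c_i\neq0\}$, $r(v)=\max\{i:c_i\neq0\}$ and $\omega(v)=r(v)-l(v)$. *)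

theory Defs
  imports Complex_Main
begin

text \<open>The space V with basis v_i (i in Z) is modelled as the finitely supported
functions int => complex (coefficient vectors); C^Z is int => complex.\<close>

definition Vsp :: "(int \<Rightarrow> complex) set" where
  "Vsp = {c. finite {i. c i \<noteq> 0}}"

definition basisv :: "int \<Rightarrow> int \<Rightarrow> complex" where
  "basisv k = (\<lambda>j. if j = k then 1 else 0)"

definition pair :: "(int \<Rightarrow> complex) \<Rightarrow> (int \<Rightarrow> complex) \<Rightarrow> complex" where
  "pair a v = (\<Sum>i\<in>{i. v i \<noteq> 0}. a i * v i)"

text \<open>n . v_i = v_(i+n), extended linearly\<close>
definition shiftV :: "int \<Rightarrow> (int \<Rightarrow> complex) \<Rightarrow> (int \<Rightarrow> complex)" where
  "shiftV n v = (\<lambda>j. v (j - n))"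

definition shiftA :: "int \<Rightarrow> (int \<Rightarrow> complex) \<Rightarrow> (int \<Rightarrow> complex)" where
  "shiftA n a = (\<lambda>i. a (i + n))"

text \<open>linear independence of an indexed family (so repeated members count as dependent)\<close>
definition fam_indep :: "'i set \<Rightarrow> ('i \<Rightarrow> int \<Rightarrow> complex) \<Rightarrow> bool" where
  "fam_indep I f \<longleftrightarrow> (\<forall>S c. finite S \<and> S \<subseteq> I \<and> (\<lambda>j. \<Sum>s\<in>S. c s * f s j) = (\<lambda>j. 0)
      \<longrightarrow> (\<forall>s\<in>S. c s = 0))"

definition fam_span :: "'i set \<Rightarrow> ('i \<Rightarrow> int \<Rightarrow> complex) \<Rightarrow> (int \<Rightarrow> complex) set" where
  "fam_span I f = {w. \<exists>S c. finite S \<and> S \<subseteq> I \<and> w = (\<lambda>j. \<Sum>s\<in>S. c s * f s j)}"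

definition is_basis_of :: "'i set \<Rightarrow> ('i \<Rightarrow> int \<Rightarrow> complex) \<Rightarrow> (int \<Rightarrow> complex) set \<Rightarrow> bool" where
  "is_basis_of I f W \<longleftrightarrow> (\<forall>i\<in>I. f i \<in> W) \<and> fam_indep I f \<and> fam_span I f = W"

definition generic :: "(int \<Rightarrow> complex) \<Rightarrow> bool" where
  "generic a \<longleftrightarrow> fam_indep (UNIV :: int set) (\<lambda>n. shiftA n a)"

definition perp :: "(int \<Rightarrow> complex) \<Rightarrow> (int \<Rightarrow> complex) set" where
  "perp a = {v \<in> Vsp. \<forall>i. pair a (shiftV i v) = 0}"

definition lidx :: "(int \<Rightarrow> complex) \<Rightarrow> int" where
  "lidx v = Min {i. v i \<noteq> 0}"

definition ridx :: "(int \<Rightarrow> complex) \<Rightarrow> int" where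
  "ridx v = Max {i. v i \<noteq> 0}"

definition width :: "(int \<Rightarrow> complex) \<Rightarrow> int" where
  "width v = ridx v - lidx v"

end

theory Submission
  imports Defs
begin

(* Read V as the ring of Laurent polynomials, the translate n . v being t^n v. A non-zero v of
   width m divides every w in V with a remainder supported in [0, m): subtracting translates of v
   cancels the extreme coefficients of w, one at a time, against the extreme coefficients of v.
   Since a^perp is a translation-invariant subspace, the remainder of an element of a^perp lies in
   a^perp and has width below m, so it vanishes when m is minimal. Hence the translates of v span
   a^perp, and together with v_0, ..., v_(m-1) they span V. Independence comes from comparing top
   coefficients, and a non-trivial linear relation among the translates of a is itself a non-zero
   element of a^perp. *)

lemma Vsp_fun_upd: "d \<in> Vsp \<Longrightarrow> d(s := x) \<in> Vsp"
  unfolding Vsp_def by (auto intro: finite_subset[of _ "insert s {j. d j \<noteq> 0}"])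

lemma restrict_in_Vsp: "finite S \<Longrightarrow> (\<lambda>s. if s \<in> S then c s else 0) \<in> Vsp"
  unfolding Vsp_def by (auto intro: finite_subset[of _ S])

lemma Vsp_bounded:
  assumes "w \<in> Vsp"
  obtains n :: nat where "\<And>j. int n \<le> \<bar>j\<bar> \<Longrightarrow> w j = 0"
proof
  define b where "b = Max (insert 0 (abs ` {j. w j \<noteq> 0}))"
  have "finite (abs ` {j. w j \<noteq> 0})" using assms by (simp add: Vsp_def)
  then have "\<bar>j\<bar> \<le> b" if "w j \<noteq> 0" for j
    using that unfolding b_def by (intro Max_ge) auto
  moreover have "b < int (nat b + 1)" by linarith
  ultimately show "w j = 0" if "int (nat b + 1) \<le> \<bar>j\<bar>" for j
    using that by fastforce
qed

lemma support_between_idx: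
  assumes "v \<in> Vsp" "v j \<noteq> 0"
  shows "lidx v \<le> j" "j \<le> ridx v"
  using assms by (auto simp: Vsp_def lidx_def ridx_def)

lemma nonzero_at_idx:
  assumes "v \<in> Vsp" "v \<noteq> (\<lambda>j. 0)"
  shows "v (lidx v) \<noteq> 0" "v (ridx v) \<noteq> 0"
proof -
  have "finite {j. v j \<noteq> 0}" "{j. v j \<noteq> 0} \<noteq> {}"
    using assms by (auto simp: Vsp_def)
  from Min_in[OF this] Max_in[OF this] show "v (lidx v) \<noteq> 0" "v (ridx v) \<noteq> 0"
    by (auto simp: lidx_def ridx_def)
qed

lemma width_nonneg:
  assumes "v \<in> Vsp" "v \<noteq> (\<lambda>j. 0)"
  shows "0 \<le> width v"
  using support_between_idx[OF assms(1) nonzero_at_idx(1)[OF assms]] by (simp add: width_def)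

lemma width_less:
  assumes "w \<in> Vsp" "w \<noteq> (\<lambda>j. 0)" "\<And>j. w j \<noteq> 0 \<Longrightarrow> lo \<le> j \<and> j < hi"
  shows "width w < hi - lo"
  using assms(3)[OF nonzero_at_idx(1)[OF assms(1,2)]] assms(3)[OF nonzero_at_idx(2)[OF assms(1,2)]]
  by (simp add: width_def)

lemma pair_shiftV:
  assumes "finite F" "{k. w k \<noteq> 0} \<subseteq> F"
  shows "pair a (shiftV i w) = (\<Sum>k\<in>F. a (k + i) * w k)"
proof -
  have supp: "{k. shiftV i w k \<noteq> 0} = (\<lambda>k. k + i) ` {k. w k \<noteq> 0}"
    by (force simp: shiftV_def image_iff)
  have "pair a (shiftV i w) = (\<Sum>k | w k \<noteq> 0. a (k + i) * w k)"
    unfolding pair_def supp by (subst sum.reindex) (auto simp: shiftV_def)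
  also have "\<dots> = (\<Sum>k\<in>F. a (k + i) * w k)"
    using assms by (intro sum.mono_neutral_left) auto
  finally show ?thesis .
qed

lemma perp_lincomb:
  assumes "x \<in> perp a" "y \<in> perp a"
  shows "(\<lambda>j. c * x j + e * y j) \<in> perp a"
proof -
  let ?F = "{k. x k \<noteq> 0} \<union> {k. y k \<noteq> 0}"
  have fin: "finite ?F" using assms by (auto simp: perp_def Vsp_def)
  have "pair a (shiftV i (\<lambda>j. c * x j + e * y j)) = 0" for i
  proof -
    have "pair a (shiftV i (\<lambda>j. c * x j + e * y j)) = (\<Sum>k\<in>?F. a (k + i) * (c * x k + e * y k))"
      using fin by (intro pair_shiftV) auto
    also have "\<dots> = c * (\<Sum>k\<in>?F. a (k + i) * x k) + e * (\<Sum>k\<in>?F. a (k + i) * y k)"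
      by (simp add: sum_distrib_left sum.distrib algebra_simps)
    also have "\<dots> = c * pair a (shiftV i x) + e * pair a (shiftV i y)"
      using pair_shiftV[OF fin, of x a i] pair_shiftV[OF fin, of y a i] by auto
    also have "\<dots> = 0" using assms by (simp add: perp_def)
    finally show ?thesis .
  qed
  moreover have "finite {k. c * x k + e * y k \<noteq> 0}"
    using fin by (rule finite_subset[rotated]) auto
  ultimately show ?thesis by (simp add: perp_def Vsp_def)
qed

lemma perp_diff: "x \<in> perp a \<Longrightarrow> y \<in> perp a \<Longrightarrow> (\<lambda>j. x j - y j) \<in> perp a"
  using perp_lincomb[of x a y 1 "-1"] by simp

lemma perp_shiftV:
  assumes "w \<in> perp a"
  shows "shiftV n w \<in> perp a"
proof -
  have "{k. shiftV n w k \<noteq> 0} = (\<lambda>k. k + n) ` {k. w k \<noteq> 0}"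
    by (force simp: shiftV_def image_iff)
  moreover have "shiftV i (shiftV n w) = shiftV (i + n) w" for i
    by (simp add: shiftV_def algebra_simps)
  ultimately show ?thesis using assms by (simp add: perp_def Vsp_def)
qed

lemma perp_zero_eq_Vsp: "perp (\<lambda>_. 0) = Vsp"
  by (simp add: perp_def pair_def)

lemma Vsp_shiftV: "v \<in> Vsp \<Longrightarrow> shiftV n v \<in> Vsp"
  using perp_shiftV[of v "\<lambda>_. 0"] by (simp add: perp_zero_eq_Vsp)

lemma fam_span_perp:
  assumes "\<And>i. i \<in> I \<Longrightarrow> f i \<in> perp a"
  shows "fam_span I f \<subseteq> perp a"
proof -
  have "finite S \<Longrightarrow> S \<subseteq> I \<Longrightarrow> (\<lambda>j. \<Sum>s\<in>S. c s * f s j) \<in> perp a" for S c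
  proof (induction S rule: finite_induct)
    case empty
    show ?case by (simp add: perp_def Vsp_def pair_def shiftV_def)
  next
    case (insert s S)
    then show ?case
      using perp_lincomb[of "f s" a "\<lambda>j. \<Sum>s\<in>S. c s * f s j" "c s" 1] assms by simp
  qed
  then show ?thesis by (auto simp: fam_span_def)
qed

(* The combination of the translates s . v with coefficients d s; as Laurent polynomials, d v. *)
definition conv :: "(int \<Rightarrow> complex) \<Rightarrow> (int \<Rightarrow> complex) \<Rightarrow> int \<Rightarrow> complex" where
  "conv d v j = (\<Sum>s | d s \<noteq> 0. d s * v (j - s))"

lemma conv_eq_sum:
  assumes "finite F" "{s. d s \<noteq> 0} \<subseteq> F"
  shows "conv d v j = (\<Sum>s\<in>F. d s * v (j - s))"
  unfolding conv_def using assms by (intro sum.mono_neutral_left) auto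

lemma conv_zero_left: "conv (\<lambda>_. 0) v = (\<lambda>_. 0)"
  by (simp add: conv_def fun_eq_iff)

lemma conv_fun_upd:
  assumes "d \<in> Vsp"
  shows "conv (d(s := d s + q)) v j = conv d v j + q * v (j - s)"
proof -
  let ?F = "insert s {s. d s \<noteq> 0}"
  have fin: "finite ?F" using assms by (simp add: Vsp_def)
  have "conv (d(s := d s + q)) v j = (\<Sum>t\<in>?F. (d(s := d s + q)) t * v (j - t))"
    using fin by (intro conv_eq_sum) auto
  also have "\<dots> = (\<Sum>t\<in>?F. d t * v (j - t) + (if t = s then q * v (j - t) else 0))"
    by (intro sum.cong) (auto simp: algebra_simps)
  also have "\<dots> = (\<Sum>t\<in>?F. d t * v (j - t)) + q * v (j - s)"
    using fin by (simp add: sum.distrib)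
  also have "(\<Sum>t\<in>?F. d t * v (j - t)) = conv d v j"
    using fin by (intro conv_eq_sum[symmetric]) auto
  finally show ?thesis .
qed

lemma sum_shiftV_eq_conv:
  assumes "finite S"
  shows "(\<lambda>j. \<Sum>s\<in>S. c s * shiftV s v j) = conv (\<lambda>s. if s \<in> S then c s else 0) v"
proof
  fix j
  have "conv (\<lambda>s. if s \<in> S then c s else 0) v j = (\<Sum>s\<in>S. (if s \<in> S then c s else 0) * v (j - s))"
    using assms by (intro conv_eq_sum) auto
  then show "(\<Sum>s\<in>S. c s * shiftV s v j) = conv (\<lambda>s. if s \<in> S then c s else 0) v j"
    by (simp add: shiftV_def)
qed

lemma conv_in_fam_span:
  assumes "d \<in> Vsp"
  shows "conv d v \<in> fam_span UNIV (\<lambda>n. shiftV n v)"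
  using assms unfolding fam_span_def Vsp_def
  by (intro CollectI exI[of _ "{s. d s \<noteq> 0}"] exI[of _ d]) (simp add: conv_def shiftV_def fun_eq_iff)

lemma conv_perp:
  assumes "d \<in> Vsp" "v \<in> perp a"
  shows "conv d v \<in> perp a"
  using conv_in_fam_span[OF assms(1)] fam_span_perp[of UNIV "\<lambda>n. shiftV n v"] perp_shiftV[OF assms(2)]
  by blast

lemma conv_Vsp: "d \<in> Vsp \<Longrightarrow> v \<in> Vsp \<Longrightarrow> conv d v \<in> Vsp"
  using conv_perp[of d v "\<lambda>_. 0"] by (simp add: perp_zero_eq_Vsp)

lemma conv_eq_zeroD:
  assumes "v \<in> Vsp" "v \<noteq> (\<lambda>j. 0)" "d \<in> Vsp" "conv d v = (\<lambda>j. 0)"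
  shows "d = (\<lambda>j. 0)"
proof (rule ccontr)
  assume "d \<noteq> (\<lambda>j. 0)"
  then have top: "d (ridx d) \<noteq> 0" using nonzero_at_idx(2)[OF assms(3)] by blast
  let ?p = "ridx d + ridx v"
  have "conv d v ?p = (\<Sum>s | d s \<noteq> 0. if s = ridx d then d (ridx d) * v (ridx v) else 0)"
    unfolding conv_def
  proof (intro sum.cong refl)
    fix s assume "s \<in> {s. d s \<noteq> 0}"
    then have "s \<le> ridx d" using support_between_idx(2)[OF assms(3)] by blast
    show "d s * v (?p - s) = (if s = ridx d then d (ridx d) * v (ridx v) else 0)"
    proof (cases "s = ridx d")
      case False
      with \<open>s \<le> ridx d\<close> have "ridx v < ?p - s" by simp
      then have "v (?p - s) = 0" using support_between_idx(2)[OF assms(1)] by (meson not_le)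
      then show ?thesis using False by simp
    qed simp
  qed
  also have "\<dots> = d (ridx d) * v (ridx v)"
    using top assms(3) by (simp add: Vsp_def)
  finally show False
    using assms(4) top nonzero_at_idx(2)[OF assms(1,2)] by (simp add: fun_eq_iff)
qed

lemma fam_indep_shiftV:
  assumes "v \<in> Vsp" "v \<noteq> (\<lambda>j. 0)"
  shows "fam_indep UNIV (\<lambda>n. shiftV n v)"
  unfolding fam_indep_def
proof (intro allI impI)
  fix S c assume H: "finite S \<and> S \<subseteq> UNIV \<and> (\<lambda>j. \<Sum>s\<in>S. c s * shiftV s v j) = (\<lambda>j. 0)"
  let ?d = "\<lambda>s. if s \<in> S then c s else 0"
  have "conv ?d v = (\<lambda>j. 0)" using sum_shiftV_eq_conv[of S c v] H by simp
  then have "?d = (\<lambda>j. 0)" using H by (intro conv_eq_zeroD[OF assms restrict_in_Vsp]) auto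
  then show "\<forall>s\<in>S. c s = 0" by (metis (mono_tags))
qed

subsection \<open>Division by a Laurent polynomial\<close>

lemma conv_correct_at:
  assumes "d \<in> Vsp" "v k \<noteq> 0"
  obtains d' where "d' \<in> Vsp" "conv d' v p = w p"
    "\<And>j. v (j - p + k) = 0 \<Longrightarrow> conv d' v j = conv d v j"
proof
  let ?d' = "d(p - k := d (p - k) + (w p - conv d v p) / v k)"
  show "?d' \<in> Vsp" using assms(1) by (rule Vsp_fun_upd)
  show "conv ?d' v p = w p" using assms by (simp add: conv_fun_upd)
  show "conv ?d' v j = conv d v j" if "v (j - p + k) = 0" for j
    using that assms(1) by (simp add: conv_fun_upd algebra_simps)
qed

lemma conv_match_above:
  assumes "v \<in> Vsp" "v \<noteq> (\<lambda>j. 0)" "d \<in> Vsp" "\<And>j. t + int n \<le> j \<Longrightarrow> w j = conv d v j"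
  shows "\<exists>d'\<in>Vsp. \<forall>j \<ge> t. w j = conv d' v j"
  using assms(3,4)
proof (induction n arbitrary: d)
  case 0
  then show ?case by auto
next
  case (Suc n)
  let ?p = "t + int n"
  obtain d' where d': "d' \<in> Vsp" "conv d' v ?p = w ?p"
    "\<And>j. v (j - ?p + ridx v) = 0 \<Longrightarrow> conv d' v j = conv d v j"
    using conv_correct_at[where k = "ridx v" and v = v, OF Suc.prems(1)]
      nonzero_at_idx(2)[OF assms(1,2)] by blast
  have "w j = conv d' v j" if "?p \<le> j" for j
  proof (cases "j = ?p")
    case False
    then have "v (j - ?p + ridx v) = 0"
      using that support_between_idx(2)[OF assms(1)] by fastforce
    then show ?thesis using Suc.prems(2) that False d'(3) by simp
  qed (use d' in simp)
  then show ?case using Suc.IH d'(1) by blast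
qed

(* Correcting at p < 0 with the lowest coefficient of v changes only the positions in
   [p, p + width v), so the agreement from width v upwards is preserved. *)
lemma conv_match_below:
  assumes "v \<in> Vsp" "v \<noteq> (\<lambda>j. 0)" "d \<in> Vsp"
    "\<And>j. j < - int n \<or> width v \<le> j \<Longrightarrow> w j = conv d v j"
  shows "\<exists>d'\<in>Vsp. \<forall>j. j < 0 \<or> width v \<le> j \<longrightarrow> w j = conv d' v j"
  using assms(3,4)
proof (induction n arbitrary: d)
  case 0
  then show ?case by auto
next
  case (Suc n)
  let ?p = "- int n - 1"
  obtain d' where d': "d' \<in> Vsp" "conv d' v ?p = w ?p"
    "\<And>j. v (j - ?p + lidx v) = 0 \<Longrightarrow> conv d' v j = conv d v j"
    using conv_correct_at[where k = "lidx v" and v = v, OF Suc.prems(1)]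
      nonzero_at_idx(1)[OF assms(1,2)] by blast
  have "w j = conv d' v j" if "j < - int n \<or> width v \<le> j" for j
  proof (cases "j = ?p")
    case False
    then have "v (j - ?p + lidx v) = 0"
      using that support_between_idx[OF assms(1)] unfolding width_def by fastforce
    moreover have "j < - int (Suc n) \<or> width v \<le> j" using that False by auto
    ultimately show ?thesis using Suc.prems(2) d'(3) by simp
  qed (use d' in simp)
  then show ?case using Suc.IH d'(1) by blast
qed

lemma conv_division:
  assumes "v \<in> Vsp" "v \<noteq> (\<lambda>j. 0)" "w \<in> Vsp"
  obtains d where "d \<in> Vsp" "\<And>j. j < 0 \<or> width v \<le> j \<Longrightarrow> w j = conv d v j"
proof -
  obtain n1 where n1: "\<And>j. int n1 \<le> \<bar>j\<bar> \<Longrightarrow> w j = 0"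
    using Vsp_bounded[OF assms(3)] by blast
  then have above: "w j = conv (\<lambda>_. 0) v j" if "width v + int n1 \<le> j" for j
    using that width_nonneg[OF assms(1,2)] by (simp add: conv_zero_left)
  have "\<exists>d\<in>Vsp. \<forall>j \<ge> width v. w j = conv d v j"
    by (rule conv_match_above[OF assms(1,2) _ above]) (simp add: Vsp_def)
  then obtain d where d: "d \<in> Vsp" "\<And>j. width v \<le> j \<Longrightarrow> w j = conv d v j"
    by blast
  obtain n2 where n2: "\<And>j. int n2 \<le> \<bar>j\<bar> \<Longrightarrow> conv d v j = 0"
    using Vsp_bounded[OF conv_Vsp[OF d(1) assms(1)]] by blast
  have "w j = conv d v j" if "j < - int (max n1 n2) \<or> width v \<le> j" for j
    using that d(2) n1[of j] n2[of j] by fastforce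
  then show ?thesis
    using conv_match_below[OF assms(1,2) d(1)] that by blast
qed

lemma sum_split_Plus:
  assumes "finite (S :: ('a + 'b) set)"
  shows "(\<Sum>x\<in>S. g x) = (\<Sum>s\<in>Inl -` S. g (Inl s)) + (\<Sum>k\<in>Inr -` S. g (Inr k))"
proof -
  have "S = Inl -` S <+> Inr -` S"
    by (auto simp: Plus_def image_iff) (metis sum.exhaust)
  then have "(\<Sum>x\<in>S. g x) = (\<Sum>x\<in>Inl -` S <+> Inr -` S. g x)"
    by (rule arg_cong)
  also have "\<dots> = (\<Sum>s\<in>Inl -` S. g (Inl s)) + (\<Sum>k\<in>Inr -` S. g (Inr k))"
    using assms by (simp add: sum.Plus finite_vimageI)
  finally show ?thesis .
qed

lemma basisv_Vsp: "basisv k \<in> Vsp"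
  unfolding Vsp_def basisv_def by (auto intro: finite_subset[of _ "{k}"])

lemma sum_basisv:
  assumes "finite K"
  shows "(\<Sum>k\<in>K. e k * basisv (int k) j) = (if 0 \<le> j \<and> nat j \<in> K then e (nat j) else 0)"
proof -
  have "(\<Sum>k\<in>K. e k * basisv (int k) j) = (\<Sum>k\<in>K. if k = nat j then (if 0 \<le> j then e k else 0) else 0)"
    by (intro sum.cong) (auto simp: basisv_def)
  then show ?thesis using assms by simp
qed

lemma perp_narrow_eq_zero:
  assumes "w \<in> perp a" "\<And>j. w j \<noteq> 0 \<Longrightarrow> 0 \<le> j \<and> j < k"
    "\<And>u. u \<in> perp a \<Longrightarrow> u \<noteq> (\<lambda>j. 0) \<Longrightarrow> k \<le> width u"
  shows "w = (\<lambda>j. 0)"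
proof (rule ccontr)
  assume "w \<noteq> (\<lambda>j. 0)"
  moreover have "w \<in> Vsp" using assms(1) by (simp add: perp_def)
  ultimately have "width w < k" using width_less[of w 0 k] assms(2) by simp
  then show False using assms(3)[OF assms(1) \<open>w \<noteq> (\<lambda>j. 0)\<close>] by simp
qed

lemma is_basis_of_translates:
  assumes "v \<in> perp a" "v \<noteq> (\<lambda>j. 0)"
    and min: "\<And>u. u \<in> perp a \<Longrightarrow> u \<noteq> (\<lambda>j. 0) \<Longrightarrow> width v \<le> width u"
  shows "is_basis_of UNIV (\<lambda>n. shiftV n v) (perp a)"
proof -
  have v: "v \<in> Vsp" using assms(1) by (simp add: perp_def)
  have span: "w \<in> fam_span UNIV (\<lambda>n. shiftV n v)" if w: "w \<in> perp a" for w
  proof -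
    have "w \<in> Vsp" using w by (simp add: perp_def)
    then obtain d where d: "d \<in> Vsp" "\<And>j. j < 0 \<or> width v \<le> j \<Longrightarrow> w j = conv d v j"
      using conv_division[OF v assms(2)] by blast
    have "(\<lambda>j. w j - conv d v j) \<in> perp a"
      using perp_diff[OF w conv_perp[OF d(1) assms(1)]] .
    then have "(\<lambda>j. w j - conv d v j) = (\<lambda>j. 0)"
    proof (rule perp_narrow_eq_zero)
      show "0 \<le> j \<and> j < width v" if "w j - conv d v j \<noteq> 0" for j
        using that d(2)[of j] by force
    qed (rule min)
    then have "w = conv d v" by (simp add: fun_eq_iff)
    then show ?thesis using conv_in_fam_span[OF d(1)] by simp
  qed
  have "fam_span UNIV (\<lambda>n. shiftV n v) \<subseteq> perp a"
    using perp_shiftV[OF assms(1)] by (intro fam_span_perp)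
  then show ?thesis
    using span perp_shiftV[OF assms(1)] fam_indep_shiftV[OF v assms(2)]
    unfolding is_basis_of_def by auto
qed

lemma fam_indep_translates_unit_vectors:
  assumes "v \<in> perp a" "v \<noteq> (\<lambda>j. 0)" "width v = int m"
    and min: "\<And>u. u \<in> perp a \<Longrightarrow> u \<noteq> (\<lambda>j. 0) \<Longrightarrow> width v \<le> width u"
  shows "fam_indep (range Inl \<union> Inr ` {..<m})
           (\<lambda>x. case x of Inl n \<Rightarrow> shiftV n v | Inr k \<Rightarrow> basisv (int k))"
    (is "fam_indep ?I ?f")
  unfolding fam_indep_def
proof (intro allI impI)
  fix S c
  assume "finite S \<and> S \<subseteq> ?I \<and> (\<lambda>j. \<Sum>x\<in>S. c x * ?f x j) = (\<lambda>j. 0)"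
  then have S: "finite S" "S \<subseteq> ?I" and zero: "\<And>j. (\<Sum>x\<in>S. c x * ?f x j) = 0"
    by (auto simp: fun_eq_iff)
  let ?d = "\<lambda>s. if s \<in> Inl -` S then c (Inl s) else 0"
  let ?e = "\<lambda>j. \<Sum>k\<in>Inr -` S. c (Inr k) * basisv (int k) j"
  have vV: "v \<in> Vsp" using assms(1) by (simp add: perp_def)
  have fin: "finite (Inl -` S)" "finite (Inr -` S)"
    using S(1) by (auto intro: finite_vimageI)
  have sum0: "conv ?d v j + ?e j = 0" for j
  proof -
    have "conv ?d v j + ?e j = (\<Sum>s\<in>Inl -` S. c (Inl s) * shiftV s v j) + ?e j"
      using fun_cong[OF sum_shiftV_eq_conv[OF fin(1), of "\<lambda>s. c (Inl s)" v], of j] by simp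
    also have "\<dots> = (\<Sum>x\<in>S. c x * ?f x j)"
      using S(1) by (simp add: sum_split_Plus)
    finally show ?thesis using zero by simp
  qed
  have conv0: "conv ?d v = (\<lambda>j. 0)"
  proof (rule perp_narrow_eq_zero)
    show "conv ?d v \<in> perp a" using conv_perp[OF restrict_in_Vsp[OF fin(1)] assms(1)] .
    show "0 \<le> j \<and> j < width v" if "conv ?d v j \<noteq> 0" for j
    proof -
      have "?e j \<noteq> 0" using sum0[of j] that by auto
      then have "0 \<le> j \<and> Inr (nat j) \<in> S" by (simp add: sum_basisv[OF fin(2)] split: if_splits)
      then show ?thesis using S(2) assms(3) by auto
    qed
  qed (rule min)
  have "?d = (\<lambda>j. 0)"
    using conv_eq_zeroD[OF vV assms(2) restrict_in_Vsp[OF fin(1)] conv0] .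
  then have inl: "c (Inl s) = 0" if "Inl s \<in> S" for s
    using fun_cong[of ?d "\<lambda>j. 0" s] that by simp
  have inr: "c (Inr k) = 0" if "Inr k \<in> S" for k
    using sum0[of "int k"] that conv0 by (simp add: sum_basisv[OF fin(2)])
  show "\<forall>x\<in>S. c x = 0"
  proof
    fix x assume "x \<in> S"
    then show "c x = 0" using inl inr by (cases x) auto
  qed
qed

lemma Vsp_subset_fam_span_translates_unit_vectors:
  assumes "v \<in> Vsp" "v \<noteq> (\<lambda>j. 0)" "width v = int m"
  shows "Vsp \<subseteq> fam_span (range Inl \<union> Inr ` {..<m})
           (\<lambda>x. case x of Inl n \<Rightarrow> shiftV n v | Inr k \<Rightarrow> basisv (int k))"
    (is "Vsp \<subseteq> fam_span ?I ?f")
proof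
  fix w assume "w \<in> Vsp"
  then obtain d where d: "d \<in> Vsp" "\<And>j. j < 0 \<or> width v \<le> j \<Longrightarrow> w j = conv d v j"
    using conv_division[OF assms(1,2)] by blast
  define S where "S = Inl ` {s. d s \<noteq> 0} \<union> Inr ` {..<m}"
  define c where "c = case_sum d (\<lambda>k. w (int k) - conv d v (int k))"
  have S: "finite S" "S \<subseteq> ?I" "Inl -` S = {s. d s \<noteq> 0}" "Inr -` S = {..<m}"
    using d(1) by (auto simp: S_def Vsp_def)
  have "w j = (\<Sum>x\<in>S. c x * ?f x j)" for j
  proof -
    have "(\<Sum>x\<in>S. c x * ?f x j) = conv d v j + (\<Sum>k<m. c (Inr k) * basisv (int k) j)"
      using sum_split_Plus[OF S(1), of "\<lambda>x. c x * ?f x j"] S(3,4)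
      by (simp add: c_def conv_def shiftV_def)
    also have "\<dots> = w j"
    proof (cases "0 \<le> j \<and> nat j < m")
      case False
      then have "j < 0 \<or> width v \<le> j" using assms(3) by (auto simp: nat_less_iff)
      then show ?thesis using d(2) False by (auto simp: sum_basisv)
    qed (simp add: sum_basisv c_def)
    finally show ?thesis by simp
  qed
  then show "w \<in> fam_span ?I ?f"
    using S(1,2) unfolding fam_span_def by blast
qed

lemma is_basis_of_translates_unit_vectors:
  assumes "v \<in> perp a" "v \<noteq> (\<lambda>j. 0)" "width v = int m"
    and min: "\<And>u. u \<in> perp a \<Longrightarrow> u \<noteq> (\<lambda>j. 0) \<Longrightarrow> width v \<le> width u"
  shows "is_basis_of (range Inl \<union> Inr ` {..<m})
           (\<lambda>x. case x of Inl n \<Rightarrow> shiftV n v | Inr k \<Rightarrow> basisv (int k)) Vsp"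
    (is "is_basis_of ?I ?f Vsp")
proof -
  have vV: "v \<in> Vsp" using assms(1) by (simp add: perp_def)
  have mem: "?f x \<in> Vsp" for x
    using Vsp_shiftV[OF vV] basisv_Vsp by (cases x) simp_all
  then have "fam_span ?I ?f \<subseteq> Vsp"
    using fam_span_perp[of ?I ?f "\<lambda>_. 0"] by (simp add: perp_zero_eq_Vsp)
  then show ?thesis
    using mem fam_indep_translates_unit_vectors[OF assms]
      Vsp_subset_fam_span_translates_unit_vectors[OF vV assms(2,3)]
    unfolding is_basis_of_def by blast
qed

lemma perp_nonzero_if_not_generic:
  assumes "\<not> generic a"
  shows "\<exists>v\<in>perp a. v \<noteq> (\<lambda>j. 0)"
proof -
  obtain S c s0 where S: "finite S" "(\<lambda>j. \<Sum>s\<in>S. c s * shiftA s a j) = (\<lambda>j. 0)"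
    "s0 \<in> S" "c s0 \<noteq> 0"
    using assms unfolding generic_def fam_indep_def by blast
  define v where "v = (\<lambda>k. if k \<in> S then c k else 0)"
  have "pair a (shiftV i v) = 0" for i
  proof -
    have "pair a (shiftV i v) = (\<Sum>k\<in>S. a (k + i) * v k)"
      using S(1) by (intro pair_shiftV) (auto simp: v_def)
    also have "\<dots> = (\<Sum>k\<in>S. c k * shiftA k a i)"
      by (intro sum.cong) (auto simp: v_def shiftA_def algebra_simps)
    also have "\<dots> = 0" using fun_cong[OF S(2), of i] by simp
    finally show ?thesis .
  qed
  moreover have "v \<in> Vsp" "v \<noteq> (\<lambda>j. 0)"
    using restrict_in_Vsp[OF S(1)] S(3,4) by (auto simp: v_def fun_eq_iff)
  ultimately show ?thesis by (auto simp: perp_def)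
qed

theorem lemma2p3:
  fixes a :: "int \<Rightarrow> complex"
  assumes "\<not> generic a"
  defines "m \<equiv> LEAST k::nat. \<exists>v\<in>perp a. v \<noteq> (\<lambda>j. 0) \<and> width v = int k"
  shows "(\<exists>v\<in>perp a. v \<noteq> (\<lambda>j. 0)) \<and>
         (\<forall>v. v \<in> perp a \<and> v \<noteq> (\<lambda>j. 0) \<and> width v = int m \<longrightarrow>
           is_basis_of (UNIV :: int set) (\<lambda>n. shiftV n v) (perp a)
         \<and> is_basis_of (range Inl \<union> Inr ` {..<m} :: (int + nat) set)
             (\<lambda>x. case x of Inl n \<Rightarrow> shiftV n v | Inr k \<Rightarrow> basisv (int k)) Vsp)"
proof (intro conjI allI impI)
  show "\<exists>v\<in>perp a. v \<noteq> (\<lambda>j. 0)" using perp_nonzero_if_not_generic[OF assms(1)] .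
  fix v assume v: "v \<in> perp a \<and> v \<noteq> (\<lambda>j. 0) \<and> width v = int m"
  have min: "width v \<le> width u" if "u \<in> perp a" "u \<noteq> (\<lambda>j. 0)" for u
  proof -
    have u: "0 \<le> width u" using that width_nonneg by (simp add: perp_def)
    then have "m \<le> nat (width u)" unfolding m_def using that by (intro Least_le) auto
    then show ?thesis using u v by (simp add: le_nat_iff)
  qed
  show "is_basis_of UNIV (\<lambda>n. shiftV n v) (perp a)"
    using is_basis_of_translates v min by blast
  show "is_basis_of (range Inl \<union> Inr ` {..<m})
          (\<lambda>x. case x of Inl n \<Rightarrow> shiftV n v | Inr k \<Rightarrow> basisv (int k)) Vsp"
    using is_basis_of_translates_unit_vectors v min by blast
qed

end
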